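(* Let $\mathbb{K}\in\{\mathbb{R},\mathbb{C}\}$. Suppose $U=[U_1\ \cdots\ U_M]$, where each $U_i$ is a submatrix whose columns come from $S_i$, with $S_1,\dots,S_M$ independent subspaces of $\mathbb{K}^m$, and the columns of $U_i$ are generic for $S_i$. Suppose $P\in\mathbb{K}^{r\times m}$ with $r\ge\operatorname{rank}(U)$ is a row selection matrix such that $\operatorname{rank}(PU)=\operatorname{rank}(U)$. Then the subspaces $P(S_1),\dots,P(S_M)$ are independent.
   Context: Subspaces $S_1,\dots,S_M$ are independent if $\dim(S_1+\dots+S_M)=\dim S_1+\dots+\dim S_M$ (and this is at most the ambient dimension). A set of vectors from a $d$-dimensional subspace $S$ is generic if it has more than $d$ elements and every $d$ of them form a basis of $S$. A row selection matrix is a matrix whose rows are distinct standard basis row vectors, so that $PU$ consists of a subset of the rows of $U$. *)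

theory Defs
  imports "HOL-Analysis.Analysis"
begin

text \<open>Linear algebra over an arbitrary field 'k on 'k^'m, using the
  vector-space structure vec (scalar multiplication *s), so that for
  'k = complex spans/dimensions are complex ones.\<close>

definition indep_subspaces :: "nat \<Rightarrow> (nat \<Rightarrow> (('k::field)^'m) set) \<Rightarrow> bool" where
  "indep_subspaces M S \<longleftrightarrow>
     vec.dim (vec.span (\<Union>i<M. S i)) = (\<Sum>i<M. vec.dim (S i))"

definition generic_for :: "(('k::field)^'m) set \<Rightarrow> ('j \<Rightarrow> 'k^'m) \<Rightarrow> 'j set \<Rightarrow> bool" where
  "generic_for S f J \<longleftrightarrow> finite J \<and> card J > vec.dim S \<and>
     (\<forall>K\<subseteq>J. card K = vec.dim S \<longrightarrow>
        inj_on f K \<and> vec.independent (f ` K) \<and> vec.span (f ` K) = S)"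

definition row_selection :: "('k::field)^'m^'r \<Rightarrow> bool" where
  "row_selection P \<longleftrightarrow> (\<exists>\<sigma>::'r \<Rightarrow> 'm. inj \<sigma> \<and> (\<forall>i. P $ i = axis (\<sigma> i) 1))"

text \<open>The statement of the lemma for a fixed scalar field 'k.
  U is m x n; column j of U belongs to block blk j < M (block U_i = columns j
  with blk j = i), S i are subspaces of 'k^'m.\<close>
definition lemma3_claim :: "'k::field itself \<Rightarrow> 'm::finite itself \<Rightarrow> 'n::finite itself
    \<Rightarrow> 'r::finite itself \<Rightarrow> bool" where
  "lemma3_claim _ _ _ _ \<longleftrightarrow>
    (\<forall>(M::nat) (S :: nat \<Rightarrow> ('k^'m) set) (U :: 'k^'n^'m) (blk :: 'n \<Rightarrow> nat) (P :: 'k^'m^'r).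
       (\<forall>i<M. vec.subspace (S i)) \<longrightarrow>
       indep_subspaces M S \<longrightarrow>
       (\<forall>j. blk j < M) \<longrightarrow>
       (\<forall>j. column j U \<in> S (blk j)) \<longrightarrow>
       (\<forall>i<M. generic_for (S i) (\<lambda>j. column j U) {j. blk j = i}) \<longrightarrow>
       row_selection P \<longrightarrow>
       CARD('r) \<ge> rank U \<longrightarrow>
       rank (P ** U) = rank U \<longrightarrow>
       indep_subspaces M (\<lambda>i. (\<lambda>x. P *v x) ` S i))"

end

theory Submission
  imports Defs
begin

text \<open>The row space of \<open>P U\<close> lies in that of \<open>U\<close>, so equality of ranks makes the two
  row spaces equal; hence \<open>P U y = 0\<close> forces \<open>U y = 0\<close>, i.e. \<open>P\<close> is injective on the column
  space of \<open>U\<close>. Every \<open>S\<^sub>i\<close> is spanned by generic columns of \<open>U\<close>, so their sum lies in the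
  column space, and an injective linear map on the sum preserves all the dimensions
  entering the definition of independence.\<close>

lemma row_matrix_mult_in_span_rows:
  fixes A :: "'k::field^'n^'r" and U :: "'k^'p^'n"
  shows "row i (A ** U) \<in> vec.span (rows U)"
proof -
  have "row i (A ** U) = (\<Sum>j\<in>UNIV. A $ i $ j *s row j U)"
    by (simp add: vec_eq_iff row_def matrix_matrix_mult_def sum_component mult.commute)
  also have "\<dots> \<in> vec.span (rows U)"
    by (intro vec.span_sum vec.span_scale vec.span_base) (auto simp: rows_def)
  finally show ?thesis .
qed

lemma span_rows_matrix_mult_eq:
  fixes A :: "'k::field^'n^'r" and U :: "'k^'p^'n"
  assumes "rank (A ** U) = rank U"
  shows "vec.span (rows (A ** U)) = vec.span (rows U)"
proof -
  have "rows (A ** U) \<subseteq> vec.span (rows U)"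
    using row_matrix_mult_in_span_rows by (auto simp: rows_def)
  then have "vec.span (rows (A ** U)) = vec.span (vec.span (rows U))"
    by (rule vec.dim_eq_span) (use assms in \<open>simp add: row_rank_def_gen\<close>)
  then show ?thesis
    by simp
qed

lemma matrix_vector_mult_eq_0_if_rank_mult_eq:
  fixes A :: "'k::field^'n^'r" and U :: "'k^'p^'n"
  assumes rk: "rank (A ** U) = rank U" and "A *v (U *v y) = 0"
  shows "U *v y = 0"
proof -
  define T where "T = {v :: 'k^'p. (\<Sum>k\<in>UNIV. v $ k * y $ k) = 0}"
  have "vec.subspace T"
    unfolding vec.subspace_def T_def
    by (auto simp: sum.distrib distrib_right mult.assoc sum_distrib_left[symmetric])
  moreover have "(A ** U) *v y = 0"
    using \<open>A *v (U *v y) = 0\<close> by (simp add: matrix_vector_mul_assoc)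
  then have "rows (A ** U) \<subseteq> T"
    by (auto simp: rows_def row_def T_def vec_eq_iff matrix_vector_mult_def)
  ultimately have "vec.span (rows U) \<subseteq> T"
    using vec.span_minimal span_rows_matrix_mult_eq[OF rk] by metis
  then have "rows U \<subseteq> T"
    using vec.span_superset by blast
  then show ?thesis
    by (force simp: vec_eq_iff rows_def T_def row_def matrix_vector_mult_def)
qed

lemma inj_on_range_if_rank_mult_eq:
  fixes A :: "'k::field^'n^'r" and U :: "'k^'p^'n"
  assumes "rank (A ** U) = rank U"
  shows "inj_on ((*v) A) (range ((*v) U))"
proof (rule inj_onI)
  fix a b assume "a \<in> range ((*v) U)" "b \<in> range ((*v) U)" and "A *v a = A *v b"
  then obtain x y where "a = U *v x" "b = U *v y" by blast
  then have "A *v (U *v (x - y)) = 0"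
    using \<open>A *v a = A *v b\<close> by (simp add: matrix_vector_mult_diff_distrib)
  then have "U *v (x - y) = 0"
    using matrix_vector_mult_eq_0_if_rank_mult_eq[OF assms] by blast
  then show "a = b"
    using \<open>a = U *v x\<close> \<open>b = U *v y\<close> by (simp add: matrix_vector_mult_diff_distrib)
qed

lemma generic_for_subset_span:
  assumes "generic_for S f J"
  shows "S \<subseteq> vec.span (f ` J)"
proof -
  from assms have "vec.dim S \<le> card J"
    by (simp add: generic_for_def)
  then obtain K where "K \<subseteq> J" "card K = vec.dim S"
    using obtain_subset_with_card_n by metis
  with assms have "S = vec.span (f ` K)"
    by (simp add: generic_for_def)
  also have "\<dots> \<subseteq> vec.span (f ` J)"
    using \<open>K \<subseteq> J\<close> by (intro vec.span_mono image_mono)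
  finally show ?thesis .
qed

lemma indep_subspaces_linear_image:
  assumes lin: "Vector_Spaces.linear (*s) (*s) f"
    and inj: "inj_on f (vec.span (\<Union>i<M. S i))"
    and "indep_subspaces M S"
  shows "indep_subspaces M (\<lambda>i. f ` S i)"
proof -
  have "vec.dim (vec.span (\<Union>i<M. f ` S i)) = vec.dim (vec.span (\<Union>i<M. S i))"
    using vec.dim_image_eq[OF lin, of "vec.span (\<Union>i<M. S i)"] inj
    by (simp add: image_UN[symmetric] vec.linear_span_image[OF lin] vec.span_span vec.dim_span)
  also have "\<dots> = (\<Sum>i<M. vec.dim (S i))"
    using \<open>indep_subspaces M S\<close> by (simp add: indep_subspaces_def)
  also have "\<dots> = (\<Sum>i<M. vec.dim (f ` S i))"
  proof (rule sum.cong)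
    fix i assume "i \<in> {..<M}"
    then have "vec.span (S i) \<subseteq> vec.span (\<Union>i<M. S i)"
      by (intro vec.span_mono) auto
    then show "vec.dim (S i) = vec.dim (f ` S i)"
      using vec.dim_image_eq[OF lin, of "S i"] inj_on_subset[OF inj] by simp
  qed simp
  finally show ?thesis
    by (simp add: indep_subspaces_def)
qed

lemma indep_subspaces_matrix_image:
  fixes S :: "nat \<Rightarrow> ('k::field^'m) set" and U :: "'k^'n^'m" and P :: "'k^'m^'r"
  assumes "indep_subspaces M S"
    and "\<forall>i<M. S i \<subseteq> range ((*v) U)"
    and "rank (P ** U) = rank U"
  shows "indep_subspaces M (\<lambda>i. (*v) P ` S i)"
proof (rule indep_subspaces_linear_image)
  have "vec.span (\<Union>i<M. S i) \<subseteq> range ((*v) U)"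
    using assms(2) vec.subspace_image[OF vec.subspace_UNIV, of U]
    by (intro vec.span_minimal) auto
  then show "inj_on ((*v) P) (vec.span (\<Union>i<M. S i))"
    using inj_on_range_if_rank_mult_eq[OF assms(3)] inj_on_subset by blast
qed (use assms(1) in simp_all)

lemma subset_range_if_generic_columns:
  fixes U :: "'k::field^'n^'m"
  assumes "generic_for S (\<lambda>j. column j U) J"
  shows "S \<subseteq> range ((*v) U)"
proof -
  have "column j U = U *v axis j 1" for j
    by (simp add: vec_eq_iff matrix_vector_mult_def column_def axis_def if_distrib cong: if_cong)
  then have "(\<lambda>j. column j U) ` J \<subseteq> range ((*v) U)"
    by auto
  then have "vec.span ((\<lambda>j. column j U) ` J) \<subseteq> range ((*v) U)"
    using vec.subspace_image[OF vec.subspace_UNIV, of U] by (intro vec.span_minimal) auto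
  with generic_for_subset_span[OF assms] show ?thesis
    by blast
qed

lemma lemma3_claim_holds: "lemma3_claim TYPE('k::field) TYPE('m::finite) TYPE('n::finite) TYPE('r::finite)"
  unfolding lemma3_claim_def
proof (intro allI impI)
  fix M and S :: "nat \<Rightarrow> ('k^'m) set" and U :: "'k^'n^'m" and blk :: "'n \<Rightarrow> nat"
    and P :: "'k^'m^'r"
  assume "\<forall>i<M. vec.subspace (S i)" and ind: "indep_subspaces M S" and "\<forall>j. blk j < M"
    and "\<forall>j. column j U \<in> S (blk j)"
    and gen: "\<forall>i<M. generic_for (S i) (\<lambda>j. column j U) {j. blk j = i}"
    and "row_selection P" and "CARD('r) \<ge> rank U" and rk: "rank (P ** U) = rank U"
  have "\<forall>i<M. S i \<subseteq> range ((*v) U)"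
  proof (intro allI impI)
    fix i assume "i < M"
    with gen have "generic_for (S i) (\<lambda>j. column j U) {j. blk j = i}" by blast
    then show "S i \<subseteq> range ((*v) U)" by (rule subset_range_if_generic_columns)
  qed
  then show "indep_subspaces M (\<lambda>i. (\<lambda>x. P *v x) ` S i)"
    by (rule indep_subspaces_matrix_image[OF ind _ rk])
qed

theorem lemma3:
  shows "lemma3_claim TYPE(real) TYPE('m::finite) TYPE('n::finite) TYPE('r::finite)
       \<and> lemma3_claim TYPE(complex) TYPE('m::finite) TYPE('n::finite) TYPE('r::finite)"
  by (simp add: lemma3_claim_holds)

end
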